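(* For $\lambda>0$ and $c\in\mathbb R$ let $\mathbf u^{\lambda,c}$ be the unique continuous viscosity solution of $(B+\lambda\,\mathrm{Id})\mathbf u+\mathbb H(x,D\mathbf u)=c\mathbbm 1$ in $M$, and let $\mathbf u^0$ be the uniform limit on $M$, as $\lambda\to0^+$, of $\mathbf u^{\lambda,c(\mathbb H)}$ (this limit exists and is a solution of the critical system). Then, for every $c\in\mathbb R$, as $\lambda\to0^+$: the functions $\lambda\mathbf u^{\lambda,c}$ converge uniformly on $M$ to the constant vector $(c-c(\mathbb H))\mathbbm 1$, and the functions $\widehat{\mathbf u}^{\lambda,c}:=\mathbf u^{\lambda,c}-\big(\min_i\min_{x\in M}u^{\lambda,c}_i(x)\big)\mathbbm 1$ converge uniformly on $M$ to $\mathbf u^0-\big(\min_i\min_{x\in M}u^0_i(x)\big)\mathbbm 1$.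
   Context: Let $M=\mathbb T^N$ be the flat $N$-dimensional torus, with $TM=T^*M=M\times\mathbb R^N$. Let $m\ge1$ and let $H_1,\dots,H_m:T^*M\to\mathbb R$ be continuous functions such that: (H1) $p\mapsto H_i(x,p)$ is convex for every $x\in M$; (H2) there exist coercive functions $\alpha,\beta:[0,\infty)\to\mathbb R$ with $\alpha(|p|)\le H_i(x,p)\le\beta(|p|)$ for all $(x,p)$ and all $i$. Let $B=(b_{ij})$ be a real $m\times m$ matrix with $b_{ij}\le0$ for $j\ne i$, $\sum_{j=1}^m b_{ij}=0$ for every $i$, and irreducible: for every nonempty proper subset $\mathcal I\subsetneq\{1,\dots,m\}$ there exist $i\in\mathcal I$, $j\notin\mathcal I$ with $b_{ij}\neq0$. Write $\mathbbm 1=(1,\dots,1)^T$ and $\mathbb H(x,D\mathbf u)=(H_1(x,Du_1),\dots,H_m(x,Du_m))^T$. The system $(B+\lambda\mathrm{Id})\mathbf u+\mathbb H(x,D\mathbf u)=c\mathbbm 1$ means $\sum_j b_{ij}u_j+\lambda u_i+H_i(x,Du_i)=c$, $i=1,\dots,m$, for continuous $\mathbf u:M\to\mathbb R^m$, in the viscosity sense (subsolution: $H_i(x,p)+((B+\lambda\mathrm{Id})\mathbf u(x))_i\le c$ for all $p\in D^+u_i(x)$; supersolution: $\ge c$ for all $p\in D^-u_i(x)$; solution: both). The critical value $c(\mathbb H)$ is the unique $c$ for which the system with $\lambda=0$ admits a viscosity solution; the critical system is the one with $\lambda=0$, $c=c(\mathbb H)$. *)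

theory Defs
  imports "HOL-Analysis.Analysis"
begin

text \<open>The flat torus M = R^N / Z^N is represented by Z^N-periodic functions on R^N
  (type real^'n with 'n a finite index type, N = CARD('n)); T^*M = M x R^N.\<close>

definition lattice_pt :: "real^'n \<Rightarrow> bool" where
  "lattice_pt z \<longleftrightarrow> (\<forall>j. z $ j \<in> \<int>)"

definition periodic_fn :: "(real^'n \<Rightarrow> 'b) \<Rightarrow> bool" where
  "periodic_fn f \<longleftrightarrow> (\<forall>x z. lattice_pt z \<longrightarrow> f (x + z) = f x)"

definition superdiff :: "(real^'n \<Rightarrow> real) \<Rightarrow> real^'n \<Rightarrow> (real^'n) set" where
  "superdiff u x = {p. \<forall>e>0. \<exists>d>0. \<forall>y. dist y x < d \<longrightarrow>
       u y \<le> u x + p \<bullet> (y - x) + e * norm (y - x)}"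

definition subdiff :: "(real^'n \<Rightarrow> real) \<Rightarrow> real^'n \<Rightarrow> (real^'n) set" where
  "subdiff u x = {p. \<forall>e>0. \<exists>d>0. \<forall>y. dist y x < d \<longrightarrow>
       u y \<ge> u x + p \<bullet> (y - x) - e * norm (y - x)}"

definition visc_sol ::
  "nat \<Rightarrow> (nat \<Rightarrow> nat \<Rightarrow> real) \<Rightarrow> (nat \<Rightarrow> real^'n \<Rightarrow> real^'n \<Rightarrow> real) \<Rightarrow> real \<Rightarrow> real
   \<Rightarrow> (nat \<Rightarrow> real^'n \<Rightarrow> real) \<Rightarrow> bool" where
  "visc_sol m B H lam c u \<longleftrightarrow>
     (\<forall>i<m. continuous_on UNIV (u i) \<and> periodic_fn (u i)) \<and>
     (\<forall>i<m. \<forall>x. \<forall>p\<in>superdiff (u i) x.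
        H i x p + (\<Sum>j<m. B i j * u j x) + lam * u i x \<le> c) \<and>
     (\<forall>i<m. \<forall>x. \<forall>p\<in>subdiff (u i) x.
        H i x p + (\<Sum>j<m. B i j * u j x) + lam * u i x \<ge> c)"

definition crit_value ::
  "nat \<Rightarrow> (nat \<Rightarrow> nat \<Rightarrow> real) \<Rightarrow> (nat \<Rightarrow> real^'n \<Rightarrow> real^'n \<Rightarrow> real) \<Rightarrow> real" where
  "crit_value m B H = (THE c. \<exists>u. visc_sol m B H 0 c u)"

definition min_all :: "nat \<Rightarrow> (nat \<Rightarrow> real^'n \<Rightarrow> real) \<Rightarrow> real" where
  "min_all m u = (MIN i\<in>{..<m}. (INF x. u i x))"

end

theory Submission
  imports Defs
begin

text \<open>For \<open>\<lambda> > 0\<close> the discounted system satisfies a comparison principle, proved by doubling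
  the variables: at a joint maximum over \<open>(i, x, y)\<close> of \<open>u i x - v i y - k |x - y|\<^sup>2\<close> the
  coupling term has the right sign because \<open>B\<close> has nonpositive off-diagonal entries and zero row
  sums. Hence solutions are unique and, as \<open>B \<one> = 0\<close>, \<open>U \<lambda> c = U \<lambda> c\<^sub>0 + ((c - c\<^sub>0) / \<lambda>) \<one>\<close> with
  \<open>c\<^sub>0 = c(H)\<close>. So \<open>\<lambda> U \<lambda> c\<close> differs from \<open>c - c\<^sub>0\<close> by \<open>\<lambda> U \<lambda> c\<^sub>0\<close>, which tends to 0 because
  \<open>U \<lambda> c\<^sub>0\<close> converges uniformly, and normalising by the minimum removes the constant altogether.\<close>

definition lattice_floor :: "real^'n \<Rightarrow> real^'n" where
  "lattice_floor x = (\<chi> j. of_int \<lfloor>x $ j\<rfloor>)"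

lemma lattice_pt_lattice_floor: "lattice_pt (lattice_floor x)"
  unfolding lattice_pt_def lattice_floor_def by simp

lemma diff_lattice_floor_in_unit_box: "x - lattice_floor x \<in> cbox 0 1"
  unfolding mem_box_cart lattice_floor_def
  by (auto simp: of_int_floor_le) (smt (verit) floor_correct of_int_add of_int_1)

lemma periodic_fn_diff: "periodic_fn f \<Longrightarrow> lattice_pt z \<Longrightarrow> f (x - z) = f x"
  unfolding periodic_fn_def by (metis diff_add_cancel)

lemma periodic_fn_range:
  assumes "periodic_fn f"
  shows "range f = f ` cbox 0 1"
proof -
  have "f x = f (x - lattice_floor x)" for x
    using periodic_fn_diff[OF assms lattice_pt_lattice_floor] by simp
  then show ?thesis
    using diff_lattice_floor_in_unit_box by blast
qed

lemma periodic_continuous_bounded: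
  assumes "continuous_on UNIV f" "periodic_fn f"
  shows "bounded (range f)"
  using assms periodic_fn_range
  by (metis compact_cbox compact_continuous_image compact_imp_bounded continuous_on_subset top_greatest)

lemma periodic_family_bounded:
  fixes u :: "nat \<Rightarrow> real^'n \<Rightarrow> real"
  assumes "\<And>i. i < m \<Longrightarrow> continuous_on UNIV (u i) \<and> periodic_fn (u i)"
  shows "bounded ((\<lambda>(i, x). u i x) ` ({..<m} \<times> UNIV))"
proof -
  have "bounded (range (u i))" if "i < m" for i
    using assms[OF that] by (auto intro: periodic_continuous_bounded)
  moreover have "(\<lambda>(i, x). u i x) ` ({..<m} \<times> UNIV) = (\<Union>i<m. range (u i))"
    by auto
  ultimately show ?thesis
    by (auto intro: bounded_UN)
qed

lemma bounded_family_abs_le: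
  fixes u :: "nat \<Rightarrow> 'a \<Rightarrow> real"
  assumes "bounded ((\<lambda>(i, x). u i x) ` ({..<m} \<times> UNIV))"
  obtains b where "\<And>i x. i < m \<Longrightarrow> \<bar>u i x\<bar> \<le> b"
  using assms unfolding bounded_real by auto

lemma bounded_family_bdd_below:
  fixes u :: "nat \<Rightarrow> 'a \<Rightarrow> real"
  assumes "bounded ((\<lambda>(i, x). u i x) ` ({..<m} \<times> UNIV))" "i < m"
  shows "bdd_below (range (u i))"
  using bounded_imp_bdd_below[OF assms(1)] assms(2)
  by (auto intro: bdd_below_mono)

lemma superdiff_add_const: "superdiff (\<lambda>x. f x + a) x = superdiff f x"
  unfolding superdiff_def by (simp add: algebra_simps)

lemma subdiff_add_const: "subdiff (\<lambda>x. f x + a) x = subdiff f x"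
  unfolding subdiff_def by (simp add: algebra_simps)

lemma subdiff_iff_superdiff_uminus: "p \<in> subdiff g x \<longleftrightarrow> - p \<in> superdiff (\<lambda>x. - g x) x"
  unfolding subdiff_def superdiff_def by (simp add: algebra_simps)

lemma power2_norm_diff_expand:
  fixes x x' y :: "'a::real_inner"
  shows "(norm (x' - y))\<^sup>2 = (norm (x - y))\<^sup>2 + 2 * ((x - y) \<bullet> (x' - x)) + (norm (x' - x))\<^sup>2"
  by (simp add: power2_norm_eq_inner inner_diff algebra_simps inner_commute)

lemma superdiff_at_max_minus_paraboloid:
  fixes f :: "real^'n \<Rightarrow> real"
  assumes k: "k > 0"
    and max: "\<And>x'. f x' - k * (norm (x' - y))\<^sup>2 \<le> f x - k * (norm (x - y))\<^sup>2"
  shows "(2 * k) *\<^sub>R (x - y) \<in> superdiff f x"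
  unfolding superdiff_def
proof (intro CollectI allI impI)
  fix e :: real assume e: "e > 0"
  show "\<exists>d>0. \<forall>x'. dist x' x < d \<longrightarrow>
     f x' \<le> f x + ((2 * k) *\<^sub>R (x - y)) \<bullet> (x' - x) + e * norm (x' - x)"
  proof (intro exI[of _ "e / k"] conjI allI impI)
    show "e / k > 0" using e k by simp
    fix x' assume "dist x' x < e / k"
    then have "k * norm (x' - x) \<le> e"
      using k by (simp add: dist_norm field_simps)
    then have "k * (norm (x' - x))\<^sup>2 \<le> e * norm (x' - x)"
      by (simp add: power2_eq_square mult_right_mono mult.assoc[symmetric])
    then show "f x' \<le> f x + ((2 * k) *\<^sub>R (x - y)) \<bullet> (x' - x) + e * norm (x' - x)"
      using max[of x'] power2_norm_diff_expand[of x' y x] by (simp add: algebra_simps)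
  qed
qed

lemma subdiff_at_min_plus_paraboloid:
  fixes g :: "real^'n \<Rightarrow> real"
  assumes k: "k > 0"
    and min: "\<And>y'. g y + k * (norm (x - y))\<^sup>2 \<le> g y' + k * (norm (x - y'))\<^sup>2"
  shows "(2 * k) *\<^sub>R (x - y) \<in> subdiff g y"
proof -
  have "(2 * k) *\<^sub>R (y - x) \<in> superdiff (\<lambda>y. - g y) y"
  proof (rule superdiff_at_max_minus_paraboloid[OF k])
    fix y'
    show "- g y' - k * (norm (y' - x))\<^sup>2 \<le> - g y - k * (norm (y - x))\<^sup>2"
      using min[of y'] by (simp add: norm_minus_commute[of x])
  qed
  then show ?thesis
    by (simp add: subdiff_iff_superdiff_uminus scaleR_diff_right)
qed

section \<open>Comparison principle for the discounted system\<close>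

definition visc_subsol ::
  "nat \<Rightarrow> (nat \<Rightarrow> nat \<Rightarrow> real) \<Rightarrow> (nat \<Rightarrow> real^'n \<Rightarrow> real^'n \<Rightarrow> real) \<Rightarrow> real \<Rightarrow> real
   \<Rightarrow> (nat \<Rightarrow> real^'n \<Rightarrow> real) \<Rightarrow> bool" where
  "visc_subsol m B H lam c u \<longleftrightarrow>
     (\<forall>i<m. continuous_on UNIV (u i) \<and> periodic_fn (u i)) \<and>
     (\<forall>i<m. \<forall>x. \<forall>p\<in>superdiff (u i) x.
        H i x p + (\<Sum>j<m. B i j * u j x) + lam * u i x \<le> c)"

definition visc_supersol ::
  "nat \<Rightarrow> (nat \<Rightarrow> nat \<Rightarrow> real) \<Rightarrow> (nat \<Rightarrow> real^'n \<Rightarrow> real^'n \<Rightarrow> real) \<Rightarrow> real \<Rightarrow> real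
   \<Rightarrow> (nat \<Rightarrow> real^'n \<Rightarrow> real) \<Rightarrow> bool" where
  "visc_supersol m B H lam c u \<longleftrightarrow>
     (\<forall>i<m. continuous_on UNIV (u i) \<and> periodic_fn (u i)) \<and>
     (\<forall>i<m. \<forall>x. \<forall>p\<in>subdiff (u i) x.
        H i x p + (\<Sum>j<m. B i j * u j x) + lam * u i x \<ge> c)"

lemma visc_sol_iff: "visc_sol m B H lam c u \<longleftrightarrow> visc_subsol m B H lam c u \<and> visc_supersol m B H lam c u"
  unfolding visc_sol_def visc_subsol_def visc_supersol_def by blast

lemma visc_sol_bounded:
  "visc_sol m B H lam c u \<Longrightarrow> bounded ((\<lambda>(i, x). u i x) ` ({..<m} \<times> UNIV))"
  unfolding visc_sol_def by (blast intro: periodic_family_bounded)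

lemma visc_sol_add_const:
  assumes "visc_sol m B H lam c u" and rows: "\<And>i. i < m \<Longrightarrow> (\<Sum>j<m. B i j) = 0"
  shows "visc_sol m B H lam (c + lam * a) (\<lambda>i x. u i x + a)"
proof -
  have "(\<Sum>j<m. B i j * (u j x + a)) = (\<Sum>j<m. B i j * u j x)" if "i < m" for i x
    using rows[OF that] by (simp add: distrib_left sum.distrib flip: sum_distrib_right)
  moreover have "periodic_fn (\<lambda>x. u i x + a)" if "periodic_fn (u i)" for i
    using that unfolding periodic_fn_def by simp
  ultimately show ?thesis
    using assms(1) unfolding visc_sol_def superdiff_add_const subdiff_add_const
    by (auto intro!: continuous_intros simp: algebra_simps)
qed

lemma coupling_nonneg_at_max:
  fixes B :: "nat \<Rightarrow> nat \<Rightarrow> real"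
  assumes offdiag: "\<And>j. j < m \<Longrightarrow> j \<noteq> i \<Longrightarrow> B i j \<le> 0"
    and row: "(\<Sum>j<m. B i j) = 0" and max: "\<And>j. j < m \<Longrightarrow> w j \<le> w i"
  shows "0 \<le> (\<Sum>j<m. B i j * w j)"
proof -
  have "(\<Sum>j<m. B i j * (w j - w i)) = (\<Sum>j<m. B i j * w j) - w i * (\<Sum>j<m. B i j)"
    by (simp add: right_diff_distrib sum_subtractf sum_distrib_left mult.commute)
  then have "(\<Sum>j<m. B i j * w j) = (\<Sum>j<m. B i j * (w j - w i))"
    using row by simp
  also have "\<dots> \<ge> 0"
  proof (rule sum_nonneg)
    fix j assume "j \<in> {..<m}"
    then show "0 \<le> B i j * (w j - w i)"
      using offdiag[of j] max[of j] by (cases "j = i") (auto intro: mult_nonpos_nonpos)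
  qed
  finally show ?thesis .
qed

lemma finite_family_argmax:
  fixes f :: "'i \<Rightarrow> 'a \<Rightarrow> 'b::linorder"
  assumes "finite I" "I \<noteq> {}" "\<And>i. i \<in> I \<Longrightarrow> \<exists>z. \<forall>z'. f i z' \<le> f i z"
  shows "\<exists>i\<in>I. \<exists>z. \<forall>j\<in>I. \<forall>z'. f j z' \<le> f i z"
proof -
  obtain zmax where zmax: "\<And>i z'. i \<in> I \<Longrightarrow> f i z' \<le> f i (zmax i)"
    using assms(3) by metis
  let ?val = "\<lambda>i. f i (zmax i)"
  obtain i where "i \<in> I" "?val i = Max (?val ` I)"
    using Max_in[of "?val ` I"] assms(1,2) by (metis finite_imageI image_iff image_is_empty)
  then have "i \<in> I" "\<And>j. j \<in> I \<Longrightarrow> ?val j \<le> ?val i"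
    using assms(1) by auto
  then show ?thesis
    using zmax order_trans by blast
qed

lemma visc_subsol_superdiff_bounded:
  fixes u :: "nat \<Rightarrow> real^'n \<Rightarrow> real"
  assumes sub: "visc_subsol m B H lam c u"
    and bounded: "bounded ((\<lambda>(i, x). u i x) ` ({..<m} \<times> UNIV))"
    and coercive: "filterlim \<alpha> at_top at_top"
    and lower: "\<And>i x p. i < m \<Longrightarrow> \<alpha> (norm p) \<le> H i x p"
  shows "\<exists>R. \<forall>i<m. \<forall>x. \<forall>p\<in>superdiff (u i) x. norm p \<le> R"
proof -
  obtain b where b: "\<And>i x. i < m \<Longrightarrow> \<bar>u i x\<bar> \<le> b"
    using bounded_family_abs_le[OF bounded] by blast
  define K where "K = \<bar>c\<bar> + (\<Sum>i<m. \<Sum>j<m. \<bar>B i j\<bar>) * b + \<bar>lam\<bar> * b"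
  obtain R where R: "\<And>t. t \<ge> R \<Longrightarrow> \<alpha> t > K"
    using coercive unfolding filterlim_at_top_dense eventually_at_top_linorder by blast
  have "norm p \<le> R" if i: "i < m" and p: "p \<in> superdiff (u i) x" for i x p
  proof (rule ccontr)
    assume "\<not> norm p \<le> R"
    then have "K < H i x p"
      using R lower[OF i] by (meson linear order_less_le_trans)
    have "\<bar>\<Sum>j<m. B i j * u j x\<bar> \<le> (\<Sum>j<m. \<bar>B i j\<bar> * b)"
      using b by (auto intro!: order_trans[OF sum_abs] sum_mono simp: abs_mult mult_left_mono)
    also have "\<dots> \<le> (\<Sum>i<m. \<Sum>j<m. \<bar>B i j\<bar>) * b"
      using i b[OF i, of x]
      by (auto simp flip: sum_distrib_right intro!: mult_right_mono
               member_le_sum[where f = "\<lambda>i. \<Sum>j<m. \<bar>B i j\<bar>"] sum_nonneg)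
    finally have coupling: "\<bar>\<Sum>j<m. B i j * u j x\<bar> \<le> (\<Sum>i<m. \<Sum>j<m. \<bar>B i j\<bar>) * b" .
    have discount: "\<bar>lam * u i x\<bar> \<le> \<bar>lam\<bar> * b"
      using b[OF i] by (simp add: abs_mult mult_left_mono)
    have "H i x p + (\<Sum>j<m. B i j * u j x) + lam * u i x \<le> c"
      using sub i p unfolding visc_subsol_def by blast
    then have "H i x p \<le> K"
      using coupling discount unfolding K_def abs_le_iff by linarith
    with \<open>K < H i x p\<close> show False by simp
  qed
  then show ?thesis by blast
qed

text \<open>Periodicity reduces uniform continuity in \<open>x\<close> to compactness of the unit box.\<close>
lemma periodic_uniformly_continuous_in_x:
  fixes h :: "real^'n \<Rightarrow> real^'n \<Rightarrow> real"
  assumes cont: "continuous_on UNIV (\<lambda>(x, p). h x p)"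
    and per: "\<And>p. periodic_fn (\<lambda>x. h x p)" and "e > 0"
  shows "\<forall>\<^sub>F d in at_right 0. \<forall>x y p. norm p \<le> R \<longrightarrow> dist x y < d \<longrightarrow> \<bar>h x p - h y p\<bar> < e"
proof -
  obtain D where D: "\<And>z. z \<in> cbox (0::real^'n) 1 \<Longrightarrow> norm z \<le> D"
    using bounded_cbox[of "0::real^'n" 1] unfolding bounded_iff by blast
  define S where "S = cball (0::real^'n) (D + 1) \<times> cball (0::real^'n) R"
  have "uniformly_continuous_on S (\<lambda>(x, p). h x p)"
    unfolding S_def
    by (intro compact_uniformly_continuous continuous_on_subset[OF cont] compact_Times) auto
  then obtain d where d: "d > 0" and dS: "\<And>z z'. z \<in> S \<Longrightarrow> z' \<in> S \<Longrightarrow> dist z' z < d \<Longrightarrow>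
      dist ((\<lambda>(x, p). h x p) z') ((\<lambda>(x, p). h x p) z) < e"
    unfolding uniformly_continuous_on_def using \<open>e > 0\<close> by metis
  have "\<bar>h x p - h y p\<bar> < e" if "norm p \<le> R" "dist x y < min d 1" for x y p
  proof -
    define a where "a = x - lattice_floor x"
    define b where "b = y - lattice_floor x"
    have "h x p = h a p" "h y p = h b p"
      unfolding a_def b_def using periodic_fn_diff[OF per lattice_pt_lattice_floor] by auto
    moreover have "norm a \<le> D"
      unfolding a_def using D diff_lattice_floor_in_unit_box by blast
    moreover have "dist a b = dist x y"
      unfolding a_def b_def dist_norm by (simp add: algebra_simps)
    moreover from this have "norm b \<le> D + 1"
      using \<open>norm a \<le> D\<close> that(2) norm_triangle_ineq3[of b a] by (auto simp: dist_norm norm_minus_commute)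
    ultimately show ?thesis
      using dS[of "(b, p)" "(a, p)"] that unfolding S_def by (simp add: dist_Pair_Pair dist_real_def)
  qed
  then show ?thesis
    unfolding eventually_at_right_field
    by (intro exI[of _ "min d 1"]) (auto simp: d)
qed

lemma periodic_family_uniformly_continuous_in_x:
  fixes H :: "nat \<Rightarrow> real^'n \<Rightarrow> real^'n \<Rightarrow> real"
  assumes "\<And>i. i < m \<Longrightarrow> continuous_on UNIV (\<lambda>(x, p). H i x p)"
    and "\<And>i p. i < m \<Longrightarrow> periodic_fn (\<lambda>x. H i x p)" and "e > 0"
  shows "\<exists>\<delta>>0. \<forall>i<m. \<forall>x y p. norm p \<le> R \<longrightarrow> dist x y < \<delta> \<longrightarrow> \<bar>H i x p - H i y p\<bar> < e"
proof -
  have "\<forall>\<^sub>F d in at_right 0. \<forall>x y p. norm p \<le> R \<longrightarrow> dist x y < d \<longrightarrow> \<bar>H i x p - H i y p\<bar> < e"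
    if "i < m" for i
    using periodic_uniformly_continuous_in_x[OF assms(1,2)[OF that] \<open>e > 0\<close>] by blast
  then have "\<forall>\<^sub>F d in at_right 0. d > 0 \<and> (\<forall>i\<in>{..<m}. \<forall>x y p. norm p \<le> R \<longrightarrow>
      dist x y < d \<longrightarrow> \<bar>H i x p - H i y p\<bar> < e)"
    by (intro eventually_conj eventually_at_right_less) (simp add: eventually_ball_finite)
  then have "\<exists>\<delta>. \<delta> > 0 \<and> (\<forall>i\<in>{..<m}. \<forall>x y p. norm p \<le> R \<longrightarrow>
      dist x y < \<delta> \<longrightarrow> \<bar>H i x p - H i y p\<bar> < e)"
    by (rule eventually_happens'[OF trivial_limit_at_right_real])
  then show ?thesis
    by auto
qed

definition doubling_fn ::
  "(real^'n \<Rightarrow> real) \<Rightarrow> (real^'n \<Rightarrow> real) \<Rightarrow> real \<Rightarrow> (real^'n) \<times> (real^'n) \<Rightarrow> real" where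
  "doubling_fn f g k = (\<lambda>(x, y). f x - g y - k * (norm (x - y))\<^sup>2)"

lemma doubling_fn_diff_lattice:
  assumes "periodic_fn f" "periodic_fn g" "lattice_pt z"
  shows "doubling_fn f g k (x - z, y - z) = doubling_fn f g k (x, y)"
  using periodic_fn_diff[OF assms(1,3)] periodic_fn_diff[OF assms(2,3)]
  unfolding doubling_fn_def by simp

lemma doubling_fn_max_attained:
  fixes f g :: "real^'n \<Rightarrow> real"
  assumes f: "continuous_on UNIV f" "periodic_fn f"
    and g: "continuous_on UNIV g" "periodic_fn g" and "k > 0"
  shows "\<exists>z. \<forall>z'. doubling_fn f g k z' \<le> doubling_fn f g k z"
proof -
  obtain b where b: "\<And>x. \<bar>f x\<bar> \<le> b" "\<And>x. \<bar>g x\<bar> \<le> b"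
    using periodic_continuous_bounded[OF f] periodic_continuous_bounded[OF g]
    unfolding bounded_real by (metis rangeI max.cobounded1 max.cobounded2 order_trans)
  obtain D where D: "\<And>x. x \<in> cbox (0::real^'n) 1 \<Longrightarrow> norm x \<le> D"
    using bounded_cbox[of "0::real^'n" 1] unfolding bounded_iff by blast
  define \<rho> where "\<rho> = 4 * b / k + 1"
  have "\<rho> \<ge> 1" "4 * b \<le> k * \<rho>"
    using \<open>k > 0\<close> b(1)[of 0] by (auto simp: \<rho>_def field_simps)
  define K where "K = cbox (0::real^'n) 1 \<times> cball (0::real^'n) (D + \<rho>)"
  have "continuous_on K (doubling_fn f g k)"
    unfolding doubling_fn_def case_prod_unfold
    by (intro continuous_intros continuous_on_compose2[OF f(1)] continuous_on_compose2[OF g(1)]) auto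
  moreover have "compact K"
    unfolding K_def by (intro compact_Times) auto
  moreover have "(0, 0) \<in> K"
    unfolding K_def using D[of 0] \<open>\<rho> \<ge> 1\<close> by (simp add: mem_box_cart)
  ultimately obtain z where "z \<in> K" and zmax: "\<And>z'. z' \<in> K \<Longrightarrow> doubling_fn f g k z' \<le> doubling_fn f g k z"
    using continuous_attains_sup by (metis empty_iff)
  have "doubling_fn f g k (x, y) \<le> doubling_fn f g k z" for x y
  proof -
    define x' where "x' = x - lattice_floor x"
    define y' where "y' = y - lattice_floor x"
    have shift: "doubling_fn f g k (x, y) = doubling_fn f g k (x', y')"
      unfolding x'_def y'_def
      using doubling_fn_diff_lattice[OF f(2) g(2) lattice_pt_lattice_floor] by simp
    have x': "x' \<in> cbox 0 1" "norm x' \<le> D"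
      unfolding x'_def using D diff_lattice_floor_in_unit_box by auto
    show ?thesis
    proof (cases "norm (x' - y') \<le> \<rho>")
      case True
      then have "norm y' \<le> D + \<rho>"
        using x' norm_triangle_ineq3[of y' x'] by (simp add: norm_minus_commute)
      then show ?thesis
        using shift x' zmax[of "(x', y')"] unfolding K_def by simp
    next
      case False
      then have n: "\<rho> \<le> norm (x' - y')" "1 \<le> norm (x' - y')"
        using \<open>\<rho> \<ge> 1\<close> by auto
      then have "\<rho> \<le> (norm (x' - y'))\<^sup>2"
        using mult_mono[OF n] by (simp add: power2_eq_square)
      then have "4 * b \<le> k * (norm (x' - y'))\<^sup>2"
        using \<open>k > 0\<close> \<open>4 * b \<le> k * \<rho>\<close> by (meson mult_left_mono less_imp_le order_trans)
      then have "doubling_fn f g k (x', y') \<le> doubling_fn f g k (x', x')"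
        using b[of x'] b[of y'] unfolding doubling_fn_def by (simp add: abs_le_iff)
      also have "\<dots> \<le> doubling_fn f g k z"
        using x' zmax[of "(x', x')"] \<open>\<rho> \<ge> 1\<close> unfolding K_def by simp
      finally show ?thesis using shift by simp
    qed
  qed
  then show ?thesis
    by (metis prod.collapse)
qed

lemma doubling_fn_joint_max_attained:
  fixes u v :: "nat \<Rightarrow> real^'n \<Rightarrow> real"
  assumes "\<And>i. i < m \<Longrightarrow> continuous_on UNIV (u i) \<and> periodic_fn (u i)"
    and "\<And>i. i < m \<Longrightarrow> continuous_on UNIV (v i) \<and> periodic_fn (v i)"
    and "m > 0" "k > 0"
  shows "\<exists>i<m. \<exists>x y. \<forall>j<m. \<forall>z. doubling_fn (u j) (v j) k z \<le> doubling_fn (u i) (v i) k (x, y)"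
proof -
  have "\<exists>z. \<forall>z'. doubling_fn (u i) (v i) k z' \<le> doubling_fn (u i) (v i) k z" if "i \<in> {..<m}" for i
    using doubling_fn_max_attained assms(1,2) that \<open>k > 0\<close> by blast
  then obtain i z where "i \<in> {..<m}"
    and "\<forall>j\<in>{..<m}. \<forall>z'. doubling_fn (u j) (v j) k z' \<le> doubling_fn (u i) (v i) k z"
    using finite_family_argmax[of "{..<m}" "\<lambda>i. doubling_fn (u i) (v i) k"] \<open>m > 0\<close> by blast
  then show ?thesis
    by (metis lessThan_iff prod.collapse)
qed

lemma doubling_fn_max_gap:
  fixes u v :: "nat \<Rightarrow> real^'n \<Rightarrow> real"
  assumes sub: "visc_subsol m B H lam c u" and super: "visc_supersol m B H lam c v"
    and offdiag: "\<And>i j. i < m \<Longrightarrow> j < m \<Longrightarrow> j \<noteq> i \<Longrightarrow> B i j \<le> 0"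
    and rows: "\<And>i. i < m \<Longrightarrow> (\<Sum>j<m. B i j) = 0"
    and "k > 0" "i < m"
    and max: "\<And>j z. j < m \<Longrightarrow> doubling_fn (u j) (v j) k z \<le> doubling_fn (u i) (v i) k (x, y)"
  defines "p \<equiv> (2 * k) *\<^sub>R (x - y)"
  shows "p \<in> superdiff (u i) x"
    and "lam * (u i x - v i y) \<le> H i y p - H i x p"
proof -
  show psuper: "p \<in> superdiff (u i) x"
    unfolding p_def using max[OF \<open>i < m\<close>, of "(_, y)"]
    by (intro superdiff_at_max_minus_paraboloid[OF \<open>k > 0\<close>]) (simp add: doubling_fn_def)
  have psub: "p \<in> subdiff (v i) y"
    unfolding p_def
  proof (rule subdiff_at_min_plus_paraboloid[OF \<open>k > 0\<close>])
    fix y'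
    show "v i y + k * (norm (x - y))\<^sup>2 \<le> v i y' + k * (norm (x - y'))\<^sup>2"
      using max[OF \<open>i < m\<close>, of "(x, y')"] by (simp add: doubling_fn_def)
  qed
  have "0 \<le> (\<Sum>j<m. B i j * (u j x - v j y))"
    using max[of _ "(x, y)"] \<open>i < m\<close>
    by (intro coupling_nonneg_at_max offdiag rows) (auto simp: doubling_fn_def)
  moreover have "H i x p + (\<Sum>j<m. B i j * u j x) + lam * u i x \<le> c"
    using sub psuper \<open>i < m\<close> unfolding visc_subsol_def by blast
  moreover have "H i y p + (\<Sum>j<m. B i j * v j y) + lam * v i y \<ge> c"
    using super psub \<open>i < m\<close> unfolding visc_supersol_def by blast
  ultimately show "lam * (u i x - v i y) \<le> H i y p - H i x p"
    by (simp add: algebra_simps sum_subtractf)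
qed

text \<open>For large \<open>k\<close> the joint maximiser has \<open>x\<close> close to \<open>y\<close>, so the Hamiltonian gap at the common
  test gradient is below \<open>\<lambda> \<theta> / 2\<close>, while the discount term forces it to be at least \<open>\<lambda> \<theta>\<close>.\<close>
theorem visc_comparison:
  fixes u v :: "nat \<Rightarrow> real^'n \<Rightarrow> real"
  assumes "lam > 0"
    and H_cont: "\<And>i. i < m \<Longrightarrow> continuous_on UNIV (\<lambda>(x, p). H i x p)"
    and H_per: "\<And>i p. i < m \<Longrightarrow> periodic_fn (\<lambda>x. H i x p)"
    and coercive: "filterlim \<alpha> at_top at_top"
    and lower: "\<And>i x p. i < m \<Longrightarrow> \<alpha> (norm p) \<le> H i x p"
    and offdiag: "\<And>i j. i < m \<Longrightarrow> j < m \<Longrightarrow> j \<noteq> i \<Longrightarrow> B i j \<le> 0"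
    and rows: "\<And>i. i < m \<Longrightarrow> (\<Sum>j<m. B i j) = 0"
    and sub: "visc_subsol m B H lam c u" and super: "visc_supersol m B H lam c v"
    and "i0 < m"
  shows "u i0 x0 \<le> v i0 x0"
proof (rule ccontr)
  assume "\<not> u i0 x0 \<le> v i0 x0"
  define \<theta> where "\<theta> = u i0 x0 - v i0 x0"
  have "\<theta> > 0" using \<open>\<not> u i0 x0 \<le> v i0 x0\<close> by (simp add: \<theta>_def)
  have u: "\<And>i. i < m \<Longrightarrow> continuous_on UNIV (u i) \<and> periodic_fn (u i)"
    and v: "\<And>i. i < m \<Longrightarrow> continuous_on UNIV (v i) \<and> periodic_fn (v i)"
    using sub super unfolding visc_subsol_def visc_supersol_def by auto
  obtain bu bv where "\<And>i x. i < m \<Longrightarrow> \<bar>u i x\<bar> \<le> bu" "\<And>i x. i < m \<Longrightarrow> \<bar>v i x\<bar> \<le> bv"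
    using bounded_family_abs_le[OF periodic_family_bounded[of m u, OF u]]
      bounded_family_abs_le[OF periodic_family_bounded[of m v, OF v]] by metis
  then obtain b where b: "\<And>i x. i < m \<Longrightarrow> \<bar>u i x\<bar> \<le> b \<and> \<bar>v i x\<bar> \<le> b"
    by (meson max.cobounded1 max.cobounded2 order_trans)
  obtain R where R: "\<And>i x p. i < m \<Longrightarrow> p \<in> superdiff (u i) x \<Longrightarrow> norm p \<le> R"
    using visc_subsol_superdiff_bounded[OF sub periodic_family_bounded[of m u, OF u] coercive lower] by blast
  have "lam * \<theta> / 2 > 0" using \<open>lam > 0\<close> \<open>\<theta> > 0\<close> by simp
  obtain \<delta> where "\<delta> > 0" and \<delta>: "\<forall>i<m. \<forall>x y p. norm p \<le> R \<longrightarrow> dist x y < \<delta> \<longrightarrow>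
      \<bar>H i x p - H i y p\<bar> < lam * \<theta> / 2"
    using periodic_family_uniformly_continuous_in_x[where m = m and H = H and R = R,
        OF H_cont H_per \<open>lam * \<theta> / 2 > 0\<close>]
    by blast
  define k where "k = 2 * b / \<delta>\<^sup>2 + 1"
  have "b \<ge> 0" using b[OF \<open>i0 < m\<close>, of x0] by linarith
  then have "k > 0"
    unfolding k_def by (simp add: add_nonneg_pos)
  have "2 * b < k * \<delta>\<^sup>2"
    unfolding k_def using \<open>\<delta> > 0\<close> by (simp add: field_simps)
  obtain i x y where "i < m"
    and max: "\<And>j z. j < m \<Longrightarrow> doubling_fn (u j) (v j) k z \<le> doubling_fn (u i) (v i) k (x, y)"
    using doubling_fn_joint_max_attained[where u = u and v = v and m = m, OF u v _ \<open>k > 0\<close>] \<open>i0 < m\<close>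
    by (metis gr_zeroI not_less_zero)
  define p where "p = (2 * k) *\<^sub>R (x - y)"
  have "\<theta> \<le> doubling_fn (u i) (v i) k (x, y)"
    using max[OF \<open>i0 < m\<close>, of "(x0, x0)"] by (simp add: doubling_fn_def \<theta>_def)
  then have gap: "\<theta> + k * (norm (x - y))\<^sup>2 \<le> u i x - v i y"
    by (simp add: doubling_fn_def)
  then have "k * (norm (x - y))\<^sup>2 < k * \<delta>\<^sup>2"
    using b[OF \<open>i < m\<close>, of x] b[OF \<open>i < m\<close>, of y] \<open>\<theta> > 0\<close> \<open>2 * b < k * \<delta>\<^sup>2\<close>
    by (simp add: abs_le_iff)
  then have "dist y x < \<delta>"
    using \<open>k > 0\<close> \<open>\<delta> > 0\<close> by (simp add: dist_norm norm_minus_commute power_less_imp_less_base)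
  then have "\<bar>H i y p - H i x p\<bar> < lam * \<theta> / 2"
    using \<delta>[rule_format, OF \<open>i < m\<close> R[OF \<open>i < m\<close>]]
      doubling_fn_max_gap(1)[OF sub super offdiag rows \<open>k > 0\<close> \<open>i < m\<close> max]
    unfolding p_def by blast
  have "0 \<le> k * (norm (x - y))\<^sup>2"
    using \<open>k > 0\<close> by simp
  then have "lam * \<theta> \<le> lam * (u i x - v i y)"
    using gap \<open>lam > 0\<close> by simp
  also have "\<dots> \<le> H i y p - H i x p"
    unfolding p_def by (rule doubling_fn_max_gap(2)[OF sub super offdiag rows \<open>k > 0\<close> \<open>i < m\<close> max])
  also have "\<dots> < lam * \<theta> / 2"
    using \<open>\<bar>H i y p - H i x p\<bar> < lam * \<theta> / 2\<close> by linarith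
  finally show False
    using \<open>lam > 0\<close> \<open>\<theta> > 0\<close> by simp
qed

section \<open>The vanishing discount limit\<close>

corollary visc_sol_unique:
  fixes u v :: "nat \<Rightarrow> real^'n \<Rightarrow> real"
  assumes "lam > 0"
    and H_cont: "\<And>i. i < m \<Longrightarrow> continuous_on UNIV (\<lambda>(x, p). H i x p)"
    and H_per: "\<And>i p. i < m \<Longrightarrow> periodic_fn (\<lambda>x. H i x p)"
    and coercive: "filterlim \<alpha> at_top at_top"
    and lower: "\<And>i x p. i < m \<Longrightarrow> \<alpha> (norm p) \<le> H i x p"
    and offdiag: "\<And>i j. i < m \<Longrightarrow> j < m \<Longrightarrow> j \<noteq> i \<Longrightarrow> B i j \<le> 0"
    and rows: "\<And>i. i < m \<Longrightarrow> (\<Sum>j<m. B i j) = 0"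
    and "visc_sol m B H lam c u" "visc_sol m B H lam c v" "i < m"
  shows "u i x = v i x"
proof (rule antisym)
  show "u i x \<le> v i x"
    using assms(8,9) unfolding visc_sol_iff
    by (intro visc_comparison[where u = u and v = v, OF \<open>lam > 0\<close>
          H_cont H_per coercive lower offdiag rows]) (auto simp: \<open>i < m\<close>)
  show "v i x \<le> u i x"
    using assms(8,9) unfolding visc_sol_iff
    by (intro visc_comparison[where u = v and v = u, OF \<open>lam > 0\<close>
          H_cont H_per coercive lower offdiag rows]) (auto simp: \<open>i < m\<close>)
qed

lemma visc_sol_shift_level:
  fixes U :: "real \<Rightarrow> nat \<Rightarrow> real^'n \<Rightarrow> real"
  assumes "lam > 0"
    and H_cont: "\<And>i. i < m \<Longrightarrow> continuous_on UNIV (\<lambda>(x, p). H i x p)"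
    and H_per: "\<And>i p. i < m \<Longrightarrow> periodic_fn (\<lambda>x. H i x p)"
    and coercive: "filterlim \<alpha> at_top at_top"
    and lower: "\<And>i x p. i < m \<Longrightarrow> \<alpha> (norm p) \<le> H i x p"
    and offdiag: "\<And>i j. i < m \<Longrightarrow> j < m \<Longrightarrow> j \<noteq> i \<Longrightarrow> B i j \<le> 0"
    and rows: "\<And>i. i < m \<Longrightarrow> (\<Sum>j<m. B i j) = 0"
    and sol: "\<And>c. visc_sol m B H lam c (U c)" and "i < m"
  shows "U c i x = U c' i x + (c - c') / lam"
proof -
  have "visc_sol m B H lam (c' + lam * ((c - c') / lam)) (\<lambda>i x. U c' i x + (c - c') / lam)"
    by (rule visc_sol_add_const[OF sol rows])
  then have "visc_sol m B H lam c (\<lambda>i x. U c' i x + (c - c') / lam)"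
    using \<open>lam > 0\<close> by simp
  then show ?thesis
    using visc_sol_unique[OF \<open>lam > 0\<close> H_cont H_per coercive lower offdiag rows sol _ \<open>i < m\<close>]
    by simp
qed

lemma min_all_cong:
  "(\<And>i x. i < m \<Longrightarrow> u i x = v i x) \<Longrightarrow> min_all m u = min_all m v"
  unfolding min_all_def by (intro arg_cong[where f = Min] image_cong) auto

lemma min_all_le_add:
  fixes f g :: "nat \<Rightarrow> real^'n \<Rightarrow> real"
  assumes "m \<ge> 1"
    and bdd: "\<And>i. i < m \<Longrightarrow> bdd_below (range (g i))"
    and le: "\<And>i x. i < m \<Longrightarrow> g i x \<le> f i x + e"
  shows "min_all m g \<le> min_all m f + e"
proof -
  have "min_all m g - e \<le> (INF x. f i x)" if "i < m" for i
  proof (rule cINF_greatest)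
    fix x
    have "min_all m g \<le> (INF x. g i x)"
      unfolding min_all_def using \<open>i < m\<close> by (intro Min_le) auto
    also have "\<dots> \<le> g i x"
      by (rule cINF_lower[OF bdd[OF \<open>i < m\<close>]]) simp
    finally show "min_all m g - e \<le> f i x"
      using le[OF \<open>i < m\<close>, of x] by simp
  qed simp
  then have "min_all m g - e \<le> min_all m f"
    unfolding min_all_def using \<open>m \<ge> 1\<close> by (intro Min.boundedI) (auto simp: lessThan_empty_iff)
  then show ?thesis by simp
qed

lemma min_all_add_const:
  fixes u :: "nat \<Rightarrow> real^'n \<Rightarrow> real"
  assumes "m \<ge> 1" "\<And>i. i < m \<Longrightarrow> bdd_below (range (u i))"
  shows "min_all m (\<lambda>i x. u i x + a) = min_all m u + a"
proof (rule antisym)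
  show "min_all m (\<lambda>i x. u i x + a) \<le> min_all m u + a"
  proof (rule min_all_le_add[OF \<open>m \<ge> 1\<close>])
    fix i assume "i < m"
    then obtain b where "\<And>x. b \<le> u i x"
      using assms(2) by (auto simp: bdd_below_def)
    then show "bdd_below (range (\<lambda>x. u i x + a))"
      by (intro bdd_belowI2[of _ "b + a"]) simp
  qed simp
  have "min_all m u \<le> min_all m (\<lambda>i x. u i x + a) + - a"
    using assms by (intro min_all_le_add) auto
  then show "min_all m u + a \<le> min_all m (\<lambda>i x. u i x + a)" by simp
qed

lemma tendsto_min_all:
  fixes F :: "'a \<Rightarrow> nat \<Rightarrow> real^'n \<Rightarrow> real"
  assumes "m \<ge> 1"
    and lim: "uniform_limit ({..<m} \<times> UNIV) (\<lambda>t (i, x). F t i x) (\<lambda>(i, x). f i x) G"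
    and bdd_F: "\<forall>\<^sub>F t in G. bounded ((\<lambda>(i, x). F t i x) ` ({..<m} \<times> UNIV))"
    and bdd_f: "bounded ((\<lambda>(i, x). f i x) ` ({..<m} \<times> UNIV))"
  shows "((\<lambda>t. min_all m (F t)) \<longlongrightarrow> min_all m f) G"
proof (rule tendstoI)
  fix e :: real assume "e > 0"
  then have "\<forall>\<^sub>F t in G. (\<forall>z\<in>{..<m} \<times> UNIV. dist ((\<lambda>(i, x). F t i x) z) ((\<lambda>(i, x). f i x) z) < e / 2)
      \<and> bounded ((\<lambda>(i, x). F t i x) ` ({..<m} \<times> UNIV))"
    using eventually_conj[OF uniform_limitD[OF lim half_gt_zero] bdd_F] by blast
  then show "\<forall>\<^sub>F t in G. dist (min_all m (F t)) (min_all m f) < e"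
  proof (rule eventually_mono)
    fix t
    assume t: "(\<forall>z\<in>{..<m} \<times> UNIV. dist ((\<lambda>(i, x). F t i x) z) ((\<lambda>(i, x). f i x) z) < e / 2)
      \<and> bounded ((\<lambda>(i, x). F t i x) ` ({..<m} \<times> UNIV))"
    then have dist: "\<bar>F t i x - f i x\<bar> < e / 2" if "i < m" for i x
      using that by (force simp: dist_real_def)
    have close: "F t i x \<le> f i x + e / 2 \<and> f i x \<le> F t i x + e / 2" if "i < m" for i x
      using dist[OF that, of x] unfolding abs_less_iff by linarith
    have "min_all m (F t) \<le> min_all m f + e / 2"
      using t bounded_family_bdd_below[of "F t"] by (intro min_all_le_add[OF \<open>m \<ge> 1\<close>]) (auto simp: close)
    moreover have "min_all m f \<le> min_all m (F t) + e / 2"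
      using bdd_f bounded_family_bdd_below[of f] by (intro min_all_le_add[OF \<open>m \<ge> 1\<close>]) (auto simp: close)
    ultimately show "dist (min_all m (F t)) (min_all m f) < e"
      using \<open>e > 0\<close> by (simp add: dist_real_def abs_le_iff)
  qed
qed

lemma uniform_limit_tendsto_const:
  "(g \<longlongrightarrow> l) F \<Longrightarrow> uniform_limit S (\<lambda>t _. g t) (\<lambda>_. l) F"
  by (simp add: uniform_limit_iff tendsto_iff)

lemma uniform_limit_vanishing_mult:
  fixes F :: "real \<Rightarrow> 'a \<Rightarrow> real"
  assumes "uniform_limit S F f (at_right 0)" "bounded (f ` S)"
  shows "uniform_limit S (\<lambda>t z. t * F t z) (\<lambda>_. 0) (at_right 0)"
proof -
  have "bounded ((\<lambda>_. 0::real) ` S)"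
    by (rule bounded_subset[OF bounded_cball[of 0 0]]) auto
  then have "uniform_limit S (\<lambda>t z. t * F t z) (\<lambda>z. 0 * f z) (at_right 0)"
    using assms by (intro uniform_lim_mult uniform_limit_tendsto_const tendsto_ident_at)
  then show ?thesis by simp
qed

lemma uniform_limit_diff_min_all:
  fixes F :: "'a \<Rightarrow> nat \<Rightarrow> real^'n \<Rightarrow> real"
  assumes "m \<ge> 1"
    and lim: "uniform_limit ({..<m} \<times> UNIV) (\<lambda>t (i, x). F t i x) (\<lambda>(i, x). f i x) G"
    and "\<forall>\<^sub>F t in G. bounded ((\<lambda>(i, x). F t i x) ` ({..<m} \<times> UNIV))"
    and "bounded ((\<lambda>(i, x). f i x) ` ({..<m} \<times> UNIV))"
  shows "uniform_limit ({..<m} \<times> UNIV) (\<lambda>t (i, x). F t i x - min_all m (F t))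
           (\<lambda>(i, x). f i x - min_all m f) G"
  using uniform_limit_minus[OF lim uniform_limit_tendsto_const[OF tendsto_min_all[OF assms]]]
  by (simp add: case_prod_unfold)

theorem theorem2:
  fixes m :: nat
    and H :: "nat \<Rightarrow> real^'n \<Rightarrow> real^'n \<Rightarrow> real"
    and B :: "nat \<Rightarrow> nat \<Rightarrow> real"
    and \<alpha> \<beta> :: "real \<Rightarrow> real"
    and U :: "real \<Rightarrow> real \<Rightarrow> nat \<Rightarrow> real^'n \<Rightarrow> real"
    and u0 :: "nat \<Rightarrow> real^'n \<Rightarrow> real"
  assumes m_pos: "m \<ge> 1"
    and H_cont: "\<And>i. i < m \<Longrightarrow> continuous_on UNIV (\<lambda>(x, p). H i x p)"
    and H_per: "\<And>i p. i < m \<Longrightarrow> periodic_fn (\<lambda>x. H i x p)"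
    and H_conv: "\<And>i x. i < m \<Longrightarrow> convex_on UNIV (H i x)"
    and \<alpha>_coer: "filterlim \<alpha> at_top at_top"
    and \<beta>_coer: "filterlim \<beta> at_top at_top"
    and H_bounds: "\<And>i x p. i < m \<Longrightarrow> \<alpha> (norm p) \<le> H i x p \<and> H i x p \<le> \<beta> (norm p)"
    and B_offdiag: "\<And>i j. i < m \<Longrightarrow> j < m \<Longrightarrow> j \<noteq> i \<Longrightarrow> B i j \<le> 0"
    and B_rows: "\<And>i. i < m \<Longrightarrow> (\<Sum>j<m. B i j) = 0"
    and B_irred: "\<And>I. I \<noteq> {} \<Longrightarrow> I \<subset> {..<m} \<Longrightarrow> \<exists>i\<in>I. \<exists>j\<in>{..<m} - I. B i j \<noteq> 0"
    and U_sol: "\<And>lam c. lam > 0 \<Longrightarrow> visc_sol m B H lam c (U lam c)"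
    and u0_lim: "uniform_limit ({..<m} \<times> UNIV)
                   (\<lambda>lam (i, x). U lam (crit_value m B H) i x) (\<lambda>(i, x). u0 i x) (at_right 0)"
  shows "\<forall>c::real.
           uniform_limit ({..<m} \<times> UNIV) (\<lambda>lam (i, x). lam * U lam c i x)
              (\<lambda>(i, x). c - crit_value m B H) (at_right 0)
         \<and> uniform_limit ({..<m} \<times> UNIV) (\<lambda>lam (i, x). U lam c i x - min_all m (U lam c))
              (\<lambda>(i, x). u0 i x - min_all m u0) (at_right 0)"
proof (intro allI conjI)
  fix c :: real
  define cs where "cs = crit_value m B H"
  have lower: "\<And>i x p. i < m \<Longrightarrow> \<alpha> (norm p) \<le> H i x p"
    using H_bounds by blast
  have shift: "U lam c i x = U lam cs i x + (c - cs) / lam" if "lam > 0" "i < m" for lam i x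
    using visc_sol_shift_level[OF that(1) H_cont H_per \<alpha>_coer lower B_offdiag B_rows U_sol[OF that(1)] that(2)] .
  have min_shift: "min_all m (U lam c) = min_all m (U lam cs) + (c - cs) / lam" if "lam > 0" for lam
    using min_all_cong[of m "U lam c" "\<lambda>i x. U lam cs i x + (c - cs) / lam"] shift[OF that]
      min_all_add_const[OF m_pos bounded_family_bdd_below[OF visc_sol_bounded[OF U_sol[OF that]]]]
    by simp
  have bounded_U: "\<forall>\<^sub>F lam in at_right 0. bounded ((\<lambda>(i, x). U lam cs i x) ` ({..<m} \<times> UNIV))"
    using eventually_at_right_less by (rule eventually_mono) (rule visc_sol_bounded[OF U_sol])
  have bounded_u0: "bounded ((\<lambda>(i, x). u0 i x) ` ({..<m} \<times> UNIV))"
    using uniform_limit_bounded[OF u0_lim[folded cs_def] bounded_U trivial_limit_at_right_real] .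
  have "uniform_limit ({..<m} \<times> UNIV) (\<lambda>lam z. lam * (case z of (i, x) \<Rightarrow> U lam cs i x) + (c - cs))
          (\<lambda>_. 0 + (c - cs)) (at_right 0)"
    by (intro uniform_limit_add uniform_limit_const uniform_limit_vanishing_mult[OF u0_lim[folded cs_def]]
          bounded_u0)
  then show "uniform_limit ({..<m} \<times> UNIV) (\<lambda>lam (i, x). lam * U lam c i x) (\<lambda>(i, x). c - cs) (at_right 0)"
    by (rule uniform_limit_cong[THEN iffD1, rotated -1])
       (use eventually_at_right_less[of "0::real"] in \<open>auto simp: shift distrib_left elim!: eventually_mono\<close>)
  show "uniform_limit ({..<m} \<times> UNIV) (\<lambda>lam (i, x). U lam c i x - min_all m (U lam c))
          (\<lambda>(i, x). u0 i x - min_all m u0) (at_right 0)"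
    using uniform_limit_diff_min_all[OF m_pos u0_lim[folded cs_def] bounded_U bounded_u0]
    by (rule uniform_limit_cong[THEN iffD1, rotated -1])
       (use eventually_at_right_less[of "0::real"] in \<open>auto simp: shift min_shift elim!: eventually_mono\<close>)
qed

end
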